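(* There exists a (necessarily discontinuous) map $f:[0,1]\to[0,1]$ such that the chain components poset $(\mathfrak{C}_f,\preceq)$ is order isomorphic to $([0,1)\cap\mathbb{Q},\le)$.
   Context: No regularity is assumed on maps. For a map $f:[0,1]\to[0,1]$ with the usual metric: an $\varepsilon$-chain from $x$ to $y$ is a finite sequence $x_0=x,\dots,x_n=y$, $n\ge1$, with $|f(x_i)-x_{i+1}|<\varepsilon$; $x\,\mathcal{C}\,y$ iff for every $\varepsilon>0$ there is an $\varepsilon$-chain from $x$ to $y$; $CR_f=\{x:x\,\mathcal{C}\,x\}$; $x\,E\,y$ iff $x\,\mathcal{C}\,y$ and $y\,\mathcal{C}\,x$; $\mathfrak{C}_f=CR_f/E$ is the set of chain components, partially ordered by $[x]\preceq[y]$ iff $y\,\mathcal{C}\,x$. *)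

theory Defs
  imports "HOL-Analysis.Analysis"
begin

text \<open>Maps f : [0,1] -> [0,1] are modelled as f :: real => real with f ` {0..1} \<subseteq> {0..1};
  no regularity is assumed. All chain points lie in [0,1].\<close>

definition eps_chain :: "(real \<Rightarrow> real) \<Rightarrow> real \<Rightarrow> real \<Rightarrow> real \<Rightarrow> bool" where
  "eps_chain f \<epsilon> x y \<longleftrightarrow>
     (\<exists>n::nat. \<exists>xs::nat \<Rightarrow> real. n \<ge> 1 \<and> xs 0 = x \<and> xs n = y \<and>
        (\<forall>i\<le>n. xs i \<in> {0..1}) \<and> (\<forall>i<n. \<bar>f (xs i) - xs (Suc i)\<bar> < \<epsilon>))"

definition chain_rel :: "(real \<Rightarrow> real) \<Rightarrow> real \<Rightarrow> real \<Rightarrow> bool" where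
  "chain_rel f x y \<longleftrightarrow> (\<forall>\<epsilon>>0. eps_chain f \<epsilon> x y)"

definition chain_recurrent :: "(real \<Rightarrow> real) \<Rightarrow> real set" where
  "chain_recurrent f = {x \<in> {0..1}. chain_rel f x x}"

definition chain_equiv :: "(real \<Rightarrow> real) \<Rightarrow> real \<Rightarrow> real \<Rightarrow> bool" where
  "chain_equiv f x y \<longleftrightarrow> chain_rel f x y \<and> chain_rel f y x"

definition chain_components :: "(real \<Rightarrow> real) \<Rightarrow> real set set" where
  "chain_components f =
     (\<lambda>x. {y \<in> chain_recurrent f. chain_equiv f x y}) ` chain_recurrent f"

text \<open>[x] \<preceq> [y] iff y C x (independent of representatives).\<close>
definition comp_le :: "(real \<Rightarrow> real) \<Rightarrow> real set \<Rightarrow> real set \<Rightarrow> bool" where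
  "comp_le f A B \<longleftrightarrow> (\<exists>x\<in>A. \<exists>y\<in>B. chain_rel f y x)"

end

theory Submission
  imports Defs
begin

(* Give the n-th rational of an enumeration the weight 2^-(n+2) and place q \<in> [0,1) at the total
  weight of the rationals in [0,q).  This embeds [0,1) \<inter> \<rat> order-preservingly into [0,1/2]
  and leaves to the right of the image of q an empty gap of length weight q.  The map fixes the
  image points, sends the point at distance d inside the gap of q to the image of a rational
  r \<le> q that, as d \<rightarrow> 0, runs through every such r infinitely often, and sends everything else
  to 0.  So on [0,1] the map takes values in the image and never increases, with equality
  exactly on the image: an \<epsilon>-chain with \<epsilon> at most the weight of q never climbs past the gap
  of q, while for r \<le> q the image of q reaches the image of r in two \<epsilon>-steps through its gap,
  for every \<epsilon>.  Hence the chain recurrent set is the image, all chain components are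
  singletons, and their order is that of the rationals. *)

definition weight :: "'a::countable \<Rightarrow> real" where
  "weight r = (1/2) ^ (to_nat r + 2)"

lemma weight_pos: "0 < weight r"
  by (simp add: weight_def)

lemma weight_le_quarter: "weight r \<le> 1/4"
proof -
  have "(1/2::real) ^ (to_nat r + 2) \<le> (1/2) ^ 2"
    by (rule power_decreasing) auto
  then show ?thesis
    by (simp add: weight_def power2_eq_square)
qed

lemma sum_weight_le_half:
  assumes "finite F"
  shows "sum weight F \<le> 1/2"
proof -
  have geometric: "(\<lambda>n. (1/2::real) ^ (n + 2)) sums (1/2)"
    using sums_mult[OF power_half_series, of "1/2"] by (simp add: power_add)
  have "sum weight F = (\<Sum>n\<in>to_nat ` F. (1/2::real) ^ (n + 2))"
    by (simp add: sum.reindex inj_on_def weight_def)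
  also have "\<dots> \<le> (\<Sum>n. (1/2::real) ^ (n + 2))"
    using assms by (intro sum_le_suminf sums_summable[OF geometric]) auto
  also have "\<dots> = 1/2"
    using geometric by (rule sums_unique[symmetric])
  finally show ?thesis .
qed

lemma weight_summable_on: "weight summable_on A"
  using sum_weight_le_half
  by (intro nonneg_bdd_above_summable_on bdd_aboveI[where M = "1/2"])
     (auto simp: less_imp_le[OF weight_pos])

lemma infsum_weight_le_half: "infsum weight A \<le> 1/2"
  using weight_summable_on sum_weight_le_half by (rule infsum_le_finite_sums)

lemma infsum_weight_mono: "A \<subseteq> B \<Longrightarrow> infsum weight A \<le> infsum weight B"
  by (rule infsum_mono2[OF weight_summable_on weight_summable_on])
     (auto simp: less_imp_le[OF weight_pos])

lemma infsum_weight_insert_le: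
  assumes "q \<notin> A" "insert q A \<subseteq> B"
  shows "infsum weight A + weight q \<le> infsum weight B"
  using infsum_insert[OF weight_summable_on assms(1)] infsum_weight_mono[OF assms(2)] by simp

definition rat_embed :: "rat \<Rightarrow> real" where
  "rat_embed q = infsum weight {0..<q}"

definition gap :: "rat \<Rightarrow> real set" where
  "gap q = {rat_embed q <..< rat_embed q + weight q}"

lemma rat_embed_zero [simp]: "rat_embed 0 = 0"
  by (simp add: rat_embed_def)

lemma rat_embed_nonneg: "0 \<le> rat_embed q"
  unfolding rat_embed_def by (rule infsum_nonneg) (simp add: less_imp_le[OF weight_pos])

lemma rat_embed_le_half: "rat_embed q \<le> 1/2"
  unfolding rat_embed_def by (rule infsum_weight_le_half)

lemma rat_embed_in_unit: "rat_embed q \<in> {0..1}"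
  using rat_embed_nonneg[of q] rat_embed_le_half[of q] by simp

lemma rat_embed_mono: "q \<le> q' \<Longrightarrow> rat_embed q \<le> rat_embed q'"
  unfolding rat_embed_def by (rule infsum_weight_mono) auto

lemma rat_embed_gap_le: "0 \<le> q \<Longrightarrow> q < q' \<Longrightarrow> rat_embed q + weight q \<le> rat_embed q'"
  unfolding rat_embed_def by (rule infsum_weight_insert_le) auto

lemma rat_embed_le_of_less_gap:
  assumes "0 \<le> r" "rat_embed s < rat_embed r + weight r"
  shows "rat_embed s \<le> rat_embed r"
  using rat_embed_mono[of s r] rat_embed_gap_le[OF assms(1), of s] assms(2) by fastforce

lemma rat_embed_notin_gap: "0 \<le> q \<Longrightarrow> rat_embed s \<notin> gap q"
  using rat_embed_le_of_less_gap[of q s] by (auto simp: gap_def)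

lemma gap_unique:
  assumes "0 \<le> q" "0 \<le> q'" "t \<in> gap q" "t \<in> gap q'"
  shows "q = q'"
proof (rule ccontr)
  assume "q \<noteq> q'"
  then consider "q < q'" | "q' < q" by linarith
  then show False
    using rat_embed_gap_le[OF assms(1), of q'] rat_embed_gap_le[OF assms(2), of q] assms(3,4)
    by cases (auto simp: gap_def)
qed

text \<open>Every rational appears infinitely often as the first coordinate of the Cantor decoding,
  so for each rational \<open>r \<le> q\<close> arbitrarily small distances \<open>d\<close> select \<open>r\<close>.\<close>
definition target :: "rat \<Rightarrow> real \<Rightarrow> rat" where
  "target q d =
     (let r = from_nat (fst (prod_decode (nat \<lfloor>1/d\<rfloor>))) in if 0 \<le> r \<and> r \<le> q then r else 0)"

lemma target_bounds: "0 \<le> q \<Longrightarrow> 0 \<le> target q d \<and> target q d \<le> q"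
  by (simp add: target_def Let_def)

lemma target_hits:
  assumes "0 \<le> r" "r \<le> q" "0 < \<delta>"
  shows "\<exists>d. 0 < d \<and> d < \<delta> \<and> target q d = r"
proof -
  obtain N :: nat where N: "1/\<delta> < real N"
    using reals_Archimedean2 by blast
  have "0 < real N"
    using N \<open>0 < \<delta>\<close> by (meson divide_pos_pos less_trans zero_less_one)
  define m where "m = prod_encode (to_nat r, N)"
  have "N \<le> m"
    unfolding m_def by (rule le_prod_encode_2)
  define d :: real where "d = 1 / (real m + 1/2)"
  have "0 < d"
    by (simp add: d_def)
  have "d < 1 / real N"
    using \<open>0 < real N\<close> \<open>N \<le> m\<close> unfolding d_def
    by (intro divide_strict_left_mono) auto
  also have "\<dots> < \<delta>"
    using N \<open>0 < \<delta>\<close> \<open>0 < real N\<close> by (simp add: field_simps)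
  finally have "d < \<delta>" .
  have "\<lfloor>1/d\<rfloor> = int m"
    unfolding d_def by (intro floor_unique) auto
  then have "target q d = r"
    using assms(1,2) by (simp add: target_def m_def)
  with \<open>0 < d\<close> \<open>d < \<delta>\<close> show ?thesis
    by blast
qed

lemma eps_chain_step:
  assumes "x \<in> {0..1}" "y \<in> {0..1}" "\<bar>f x - y\<bar> < \<epsilon>"
  shows "eps_chain f \<epsilon> x y"
  unfolding eps_chain_def
  by (rule exI[of _ 1], rule exI[of _ "\<lambda>i. if i = 0 then x else y"]) (use assms in auto)

lemma eps_chain_trans:
  assumes "eps_chain f \<epsilon> x y" "eps_chain f \<epsilon> y z"
  shows "eps_chain f \<epsilon> x z"
proof -
  obtain n xs where xs: "n \<ge> 1" "xs 0 = x" "xs n = y" "\<forall>i\<le>n. xs i \<in> {0..1}"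
      "\<forall>i<n. \<bar>f (xs i) - xs (Suc i)\<bar> < \<epsilon>"
    using assms(1) unfolding eps_chain_def by blast
  obtain m ys where ys: "m \<ge> 1" "ys 0 = y" "ys m = z" "\<forall>i\<le>m. ys i \<in> {0..1}"
      "\<forall>i<m. \<bar>f (ys i) - ys (Suc i)\<bar> < \<epsilon>"
    using assms(2) unfolding eps_chain_def by blast
  define zs where "zs i = (if i \<le> n then xs i else ys (i - n))" for i
  have zs_ys: "zs i = ys (i - n)" if "n \<le> i" for i
    using that xs(3) ys(2) by (cases "i = n") (auto simp: zs_def)
  have "\<bar>f (zs i) - zs (Suc i)\<bar> < \<epsilon>" if "i < n + m" for i
  proof (cases "i < n")
    case True
    then show ?thesis
      using xs(5) by (auto simp: zs_def)
  next
    case False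
    then have "zs i = ys (i - n)" "zs (Suc i) = ys (Suc (i - n))"
      by (auto simp: zs_ys Suc_diff_le)
    then show ?thesis
      using ys(5) that False by auto
  qed
  moreover have "zs i \<in> {0..1}" if "i \<le> n + m" for i
    using xs(4) ys(4) that by (auto simp: zs_def)
  moreover have "zs 0 = x" "zs (n + m) = z"
    using xs(2) ys(3) zs_ys[of "n + m"] by (auto simp: zs_def)
  ultimately show ?thesis
    unfolding eps_chain_def using xs(1) by (intro exI[of _ "n + m"] exI[of _ zs]) auto
qed

lemma eps_chain_below_barrier:
  assumes "eps_chain f \<epsilon> x y" "f x \<le> b"
    and barrier: "\<And>t. t \<in> {0..1} \<Longrightarrow> t < b + \<epsilon> \<Longrightarrow> f t \<le> b"
  shows "y < b + \<epsilon>"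
proof -
  obtain n xs where xs: "n \<ge> 1" "xs 0 = x" "xs n = y" "\<forall>i\<le>n. xs i \<in> {0..1}"
      "\<forall>i<n. \<bar>f (xs i) - xs (Suc i)\<bar> < \<epsilon>"
    using assms(1) unfolding eps_chain_def by blast
  have "f (xs i) \<le> b" if "i \<le> n" for i
    using that
  proof (induction i)
    case 0
    then show ?case using xs(2) assms(2) by simp
  next
    case (Suc i)
    have "f (xs i) \<le> b" "\<bar>f (xs i) - xs (Suc i)\<bar> < \<epsilon>"
      using Suc xs(5) by auto
    then have "xs (Suc i) < b + \<epsilon>"
      by linarith
    then show ?case
      using barrier xs(4) Suc.prems by blast
  qed
  then have "f (xs (n - 1)) \<le> b"
    by simp
  moreover have "\<bar>f (xs (n - 1)) - xs n\<bar> < \<epsilon>"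
    using xs(1,5) by (metis Suc_diff_1 diff_less less_numeral_extra(1) less_le_trans)
  ultimately show ?thesis
    using xs(3) by simp
qed

lemma chain_components_order_iso:
  fixes g :: "'a::order \<Rightarrow> real"
  assumes recurrent: "chain_recurrent f = g ` S"
    and rel: "\<And>a b. a \<in> S \<Longrightarrow> b \<in> S \<Longrightarrow> chain_rel f (g a) (g b) \<longleftrightarrow> b \<le> a"
  shows "\<exists>\<Phi>. bij_betw \<Phi> (chain_components f) S \<and>
           (\<forall>A\<in>chain_components f. \<forall>B\<in>chain_components f. comp_le f A B \<longleftrightarrow> \<Phi> A \<le> \<Phi> B)"
proof -
  have inj: "inj_on g S"
    by (rule inj_onI) (metis rel order.refl order.antisym)
  have "{y \<in> chain_recurrent f. chain_equiv f (g a) y} = {g a}" if "a \<in> S" for a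
    using that inj rel by (auto simp: recurrent chain_equiv_def inj_on_def intro: order.antisym)
  then have components: "chain_components f = (\<lambda>a. {g a}) ` S"
    unfolding chain_components_def recurrent image_image by (rule image_cong[OF refl])
  have bij: "bij_betw (\<lambda>a. {g a}) S (chain_components f)"
    unfolding components bij_betw_def using inj by (auto simp: inj_on_def)
  let ?\<Phi> = "inv_into S (\<lambda>a. {g a})"
  have "comp_le f {g a} {g b} \<longleftrightarrow> ?\<Phi> {g a} \<le> ?\<Phi> {g b}" if "a \<in> S" "b \<in> S" for a b
    using that rel[of b a] bij_betw_inv_into_left[OF bij] by (simp add: comp_le_def)
  then show ?thesis
    using bij_betw_inv_into[OF bij] unfolding components by blast
qed

definition rat_chain_map :: "real \<Rightarrow> real" where
  "rat_chain_map t =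
     (if t \<in> rat_embed ` {0..<1} then t
      else if \<exists>q\<in>{0..<1}. t \<in> gap q then
        (let q = THE q. q \<in> {0..<1} \<and> t \<in> gap q in rat_embed (target q (t - rat_embed q)))
      else 0)"

lemma rat_chain_map_embed: "q \<in> {0..<1} \<Longrightarrow> rat_chain_map (rat_embed q) = rat_embed q"
  by (simp add: rat_chain_map_def)

lemma rat_chain_map_gap:
  assumes "q \<in> {0..<1}" "t \<in> gap q"
  shows "rat_chain_map t = rat_embed (target q (t - rat_embed q))"
proof -
  have "t \<notin> rat_embed ` {0..<1}"
    using assms rat_embed_notin_gap by auto
  moreover have "(THE q. q \<in> {0..<1} \<and> t \<in> gap q) = q"
    using assms gap_unique by (intro the_equality) auto
  ultimately show ?thesis
    using assms by (auto simp: rat_chain_map_def)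
qed

lemma rat_chain_map_below:
  assumes "0 \<le> t"
  shows "\<exists>s\<in>{0..<1}. rat_chain_map t = rat_embed s \<and> rat_embed s \<le> t"
proof (cases "\<exists>q\<in>{0..<1}. t \<in> gap q")
  case True
  then obtain q where q: "q \<in> {0..<1}" "t \<in> gap q"
    by blast
  let ?s = "target q (t - rat_embed q)"
  have "0 \<le> ?s" "?s \<le> q"
    using q(1) target_bounds by auto
  then have "?s \<in> {0..<1}" "rat_embed ?s \<le> rat_embed q"
    using q(1) rat_embed_mono by auto
  then show ?thesis
    using rat_chain_map_gap[OF q] q(2) by (auto simp: gap_def)
next
  case False
  then show ?thesis
    using assms by (auto simp: rat_chain_map_def intro: bexI[of _ 0])
qed

lemma rat_chain_map_in_unit: "t \<in> {0..1} \<Longrightarrow> rat_chain_map t \<in> {0..1}"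
  using rat_chain_map_below[of t] rat_embed_nonneg by fastforce

lemma rat_chain_map_barrier:
  assumes "0 \<le> r" "0 \<le> t" "t < rat_embed r + weight r"
  shows "rat_chain_map t \<le> rat_embed r"
  using rat_chain_map_below[OF assms(2)] rat_embed_le_of_less_gap[OF assms(1)] assms(3) by force

text \<open>Downwards, jump from \<open>rat_embed q'\<close> to the point of its gap that the map sends to
  \<open>rat_embed q\<close>; upwards, the gap of \<open>q'\<close> is a barrier.\<close>
lemma chain_rel_rat_chain_map_embed:
  assumes q: "q \<in> {0..<1}" and q': "q' \<in> {0..<1}"
  shows "chain_rel rat_chain_map (rat_embed q') (rat_embed q) \<longleftrightarrow> q \<le> q'"
proof
  assume "chain_rel rat_chain_map (rat_embed q') (rat_embed q)"
  then have "eps_chain rat_chain_map (weight q') (rat_embed q') (rat_embed q)"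
    unfolding chain_rel_def using weight_pos by blast
  then have "rat_embed q < rat_embed q' + weight q'"
    using q' rat_chain_map_embed rat_chain_map_barrier
    by (intro eps_chain_below_barrier) auto
  then show "q \<le> q'"
    using rat_embed_gap_le[of q' q] q' by force
next
  assume "q \<le> q'"
  show "chain_rel rat_chain_map (rat_embed q') (rat_embed q)"
    unfolding chain_rel_def
  proof (intro allI impI)
    fix \<epsilon> :: real
    assume "0 < \<epsilon>"
    then obtain d where d: "0 < d" "d < min \<epsilon> (weight q')" "target q' d = q"
      using target_hits[of q q' "min \<epsilon> (weight q')"] q \<open>q \<le> q'\<close> weight_pos by auto
    let ?t = "rat_embed q' + d"
    have "?t \<in> gap q'"
      using d by (simp add: gap_def)
    have "?t \<in> {0..1}"
      using d rat_embed_le_half[of q'] rat_embed_nonneg[of q'] weight_le_quarter[of q'] by simp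
    have "eps_chain rat_chain_map \<epsilon> (rat_embed q') ?t"
      using \<open>?t \<in> {0..1}\<close> d rat_embed_in_unit rat_chain_map_embed[OF q'] by (intro eps_chain_step) auto
    moreover have "eps_chain rat_chain_map \<epsilon> ?t (rat_embed q)"
      using \<open>?t \<in> {0..1}\<close> \<open>0 < \<epsilon>\<close> d rat_embed_in_unit rat_chain_map_gap[OF q' \<open>?t \<in> gap q'\<close>]
      by (intro eps_chain_step) auto
    ultimately show "eps_chain rat_chain_map \<epsilon> (rat_embed q') (rat_embed q)"
      by (rule eps_chain_trans)
  qed
qed

lemma chain_recurrent_rat_chain_map: "chain_recurrent rat_chain_map = rat_embed ` {0..<1}"
proof
  show "rat_embed ` {0..<1} \<subseteq> chain_recurrent rat_chain_map"
    using chain_rel_rat_chain_map_embed rat_embed_in_unit by (auto simp: chain_recurrent_def)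
  show "chain_recurrent rat_chain_map \<subseteq> rat_embed ` {0..<1}"
  proof
    fix t
    assume t: "t \<in> chain_recurrent rat_chain_map"
    then have "0 \<le> t"
      by (simp add: chain_recurrent_def)
    then obtain s where s: "s \<in> {0..<1}" "rat_chain_map t = rat_embed s" "rat_embed s \<le> t"
      using rat_chain_map_below by blast
    show "t \<in> rat_embed ` {0..<1}"
    proof (rule ccontr)
      assume "t \<notin> rat_embed ` {0..<1}"
      with s have "rat_embed s < t"
        by force
      define \<epsilon> where "\<epsilon> = min (weight s) (t - rat_embed s)"
      have "0 < \<epsilon>"
        using \<open>rat_embed s < t\<close> weight_pos[of s] by (simp add: \<epsilon>_def)
      then have "eps_chain rat_chain_map \<epsilon> t t"
        using t by (simp add: chain_recurrent_def chain_rel_def)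
      then have "t < rat_embed s + \<epsilon>"
        using s rat_chain_map_barrier[of s] by (intro eps_chain_below_barrier) (auto simp: \<epsilon>_def)
      then show False
        by (simp add: \<epsilon>_def)
    qed
  qed
qed

theorem theorem3p2:
  shows "\<exists>f :: real \<Rightarrow> real. f ` {0..1} \<subseteq> {0..1} \<and>
    (\<exists>\<Phi> :: real set \<Rightarrow> rat.
       bij_betw \<Phi> (chain_components f) {q. 0 \<le> q \<and> q < 1} \<and>
       (\<forall>A\<in>chain_components f. \<forall>B\<in>chain_components f.
          comp_le f A B \<longleftrightarrow> \<Phi> A \<le> \<Phi> B))"
proof -
  have "{q. 0 \<le> q \<and> q < 1} = {0..<1::rat}"
    by auto
  then show ?thesis
    using rat_chain_map_in_unit
      chain_components_order_iso[OF chain_recurrent_rat_chain_map chain_rel_rat_chain_map_embed]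
    by (intro exI[of _ rat_chain_map]) auto
qed

end
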